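(* Assume the setting of the previous statement: $(U,V_1)\sim p(u,v_1)$, a measurable real function $f(u,v)$, $c(u)=\mathbf{E}_{v\sim p(v)}[e^{f(u,v)}]<\infty$, Borel sets $B_u\subset(c(u),\infty)$ with $S_{B_u}=\{v: e^{f(u,v)}\in B_u\}$ and $p(S_{B_u})>0$, and $q(\cdot\mid u)$ the law of $V_{2:k}=(V_2,\dots,V_k)$ drawn i.i.d. from $p(v)$ conditioned on $S_{B_u}$. For fixed $(u,v_1)$ define $$Z(v_{2:k})=\log\frac{e^{f(u,v_1)}}{\frac1k\sum_{j=1}^k e^{f(u,v_j)}}.$$ Let $p(v_{2:k})$ denote the law of $V_{2:k}$ drawn i.i.d. from $p(v)$, and let $\tilde q(\cdot\mid u)$ denote $p(v_{2:k})$ conditioned on the complement of the event on which $q$ conditions (i.e. $\tilde q(A)=p(A\mid S_{B_u}^c)$ in the paper's notation), assumed to have positive probability. For a distribution $r$ of the negatives, define $\mathrm{Bias}_r(Z)=\mathcal{I}(U;V_1)-\mathbf{E}_{(u,v_1)\sim p(u,v_1)}\mathbf{E}_{v_{2:k}\sim r}[Z]$ and $\mathrm{Var}_r(Z)=\mathrm{Var}_{v_{2:k}\sim r}[Z]$. Suppose $S_{B_u}$ is chosen so that $\mathrm{Var}_{q(v_{2:k})}[Z]\le\mathrm{Var}_{\tilde q(v_{2:k})}[Z]$. Then $$\mathrm{Bias}_p(Z)\le\mathrm{Bias}_q(Z)\quad\text{and}\quad \mathrm{Var}_p(Z)\ge\mathrm{Var}_q(Z),$$ that is, sampling the negatives $v_{2:k}\sim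 q$ instead of $p$ trades higher bias for lower variance.
   Context: $\mathbf{E}_{p(v_{2:k})}[Z]$ (averaged over $(u,v_1)$) is the NCE estimator and $\mathbf{E}_{q(v_{2:k})}[Z]$ the conditional NCE (CNCE) estimator of the mutual information $\mathcal{I}(U;V_1)$; both are lower bounds on $\mathcal{I}(U;V_1)$ with the CNCE value at most the NCE value. *)

theory Defs
  imports "HOL-Probability.Probability"
begin

definition MI :: "('u \<times> 'v) measure \<Rightarrow> 'u measure \<Rightarrow> 'v measure \<Rightarrow> real" where
  "MI P MU MV = prob_space.mutual_information P (exp 1) MU MV fst snd"

definition Zfun :: "('u \<Rightarrow> 'v \<Rightarrow> real) \<Rightarrow> nat \<Rightarrow> 'u \<Rightarrow> 'v \<Rightarrow> (nat \<Rightarrow> 'v) \<Rightarrow> real" where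
  "Zfun f k u v1 w =
     ln (exp (f u v1) / ((1 / real k) * (exp (f u v1) + (\<Sum>j\<in>{2..k}. exp (f u (w j))))))"

definition Ex :: "'a measure \<Rightarrow> ('a \<Rightarrow> real) \<Rightarrow> real" where
  "Ex r X = (\<integral>x. X x \<partial>r)"

definition Var :: "'a measure \<Rightarrow> ('a \<Rightarrow> real) \<Rightarrow> real" where
  "Var r X = (\<integral>x. (X x - Ex r X)\<^sup>2 \<partial>r)"

definition Bias :: "('u \<times> 'v) measure \<Rightarrow> 'u measure \<Rightarrow> 'v measure \<Rightarrow> ('u \<Rightarrow> (nat \<Rightarrow> 'v) measure)
    \<Rightarrow> ('u \<Rightarrow> 'v \<Rightarrow> real) \<Rightarrow> nat \<Rightarrow> real" where
  "Bias P MU MV r f k = MI P MU MV - (\<integral>uv. Ex (r (fst uv)) (Zfun f k (fst uv) (snd uv)) \<partial>P)"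

end

theory Submission
  imports Defs
begin

text \<open>Write \<open>Z = ln k + a - ln Y\<close> with \<open>a = f u v\<^sub>1\<close> and
  \<open>Y = e\<^sup>a + \<Sum>\<^sub>j e\<^bsup>f u v\<^sub>j\<^esup>\<close>, and let \<open>c = E\<^sub>p e\<^sup>f\<close>.
  By Jensen, \<open>E\<^sub>p ln Y \<le> ln (e\<^sup>a + (k - 1) c)\<close>, while on the conditioning event every
  \<open>e\<^bsup>f u v\<^sub>j\<^esup>\<close> exceeds \<open>c\<close>, so there \<open>Y \<ge> e\<^sup>a + (k - 1) c\<close> pointwise. Hence
  \<open>E\<^sub>q Z \<le> E\<^sub>p Z\<close> for every \<open>(u, v\<^sub>1)\<close>, and integrating compares the biases.
  For the variances, \<open>p\<close> is the mixture of \<open>q\<close> and \<open>q\<^sup>~\<close>, so the law of total variance gives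
  \<open>Var\<^sub>p Z \<ge> P(A) Var\<^sub>q Z + P(A\<^sup>c) Var\<^bsub>q\<^sup>~\<^esub> Z \<ge> Var\<^sub>q Z\<close>.\<close>

lemma uniform_measure_eq_density:
  assumes "finite_measure M" "measure M A > 0"
  shows "uniform_measure M A = density M (\<lambda>x. ennreal (indicator A x / measure M A))"
proof -
  have "emeasure M A = ennreal (measure M A)"
    using assms(1) by (simp add: finite_measure.emeasure_eq_measure)
  then show ?thesis
    unfolding uniform_measure_def
    using divide_ennreal[of 1 "measure M A"] assms(2)
    by (intro arg_cong[where f="density M"] ext) (auto split: split_indicator)
qed

lemma
  fixes g :: "'a \<Rightarrow> real"
  assumes M: "finite_measure M" and A: "A \<in> sets M" and pos: "measure M A > 0"
    and g: "integrable M g"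
  shows integrable_uniform_measure: "integrable (uniform_measure M A) g"
    and integral_uniform_measure:
      "integral\<^sup>L (uniform_measure M A) g = (\<integral>x. g x * indicator A x \<partial>M) / measure M A"
proof -
  have g_meas: "g \<in> borel_measurable M" using g by auto
  have dens_meas: "(\<lambda>x. indicator A x / measure M A) \<in> borel_measurable M" using A by measurable
  have "integrable M (\<lambda>x. indicator A x / measure M A * g x)"
    using integrable_real_mult_indicator[OF A g] by (simp add: mult.commute integrable_divide)
  then show "integrable (uniform_measure M A) g"
    unfolding uniform_measure_eq_density[OF M pos]
    using pos by (subst integrable_density[OF g_meas dens_meas]) auto
  show "integral\<^sup>L (uniform_measure M A) g = (\<integral>x. g x * indicator A x \<partial>M) / measure M A"
    unfolding uniform_measure_eq_density[OF M pos]
    using pos by (subst integral_density[OF g_meas dens_meas]) (auto simp: mult.commute)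
qed

lemma Var_le_integral_sq_dev:
  fixes Z :: "'a \<Rightarrow> real"
  assumes "prob_space M" "integrable M Z" "integrable M (\<lambda>x. (Z x)\<^sup>2)"
  shows "Var M Z \<le> (\<integral>x. (Z x - m)\<^sup>2 \<partial>M)"
proof -
  interpret prob_space M by fact
  have "(\<integral>x. (Z x - m)\<^sup>2 \<partial>M) = Var M Z + (Ex M Z - m)\<^sup>2"
    using assms(2,3) unfolding Var_def Ex_def
    by (simp add: variance_eq power2_diff prob_space field_simps power2_eq_square[symmetric])
  then show ?thesis by simp
qed

lemma Var_ge_conditional_Var_mixture:
  fixes Z :: "'a \<Rightarrow> real"
  assumes M: "prob_space M" and A: "A \<in> sets M"
    and pos: "measure M A > 0" and pos_compl: "measure M (space M - A) > 0"
    and Z: "integrable M Z" and Z2: "integrable M (\<lambda>x. (Z x)\<^sup>2)"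
  shows "measure M A * Var (uniform_measure M A) Z
           + measure M (space M - A) * Var (uniform_measure M (space M - A)) Z \<le> Var M Z"
proof -
  interpret prob_space M by fact
  have Ac: "space M - A \<in> sets M" using A by auto
  define m where "m = Ex M Z"
  have dev: "integrable M (\<lambda>x. (Z x - m)\<^sup>2)"
    using Z Z2 by (simp add: power2_diff)
  have Var_cond_le: "Var (uniform_measure M E) Z \<le> (\<integral>x. (Z x - m)\<^sup>2 * indicator E x \<partial>M) / measure M E"
    if E: "E \<in> sets M" "measure M E > 0" for E
  proof -
    have "prob_space (uniform_measure M E)"
      using E by (intro prob_space_uniform_measure) (auto simp: emeasure_eq_measure)
    then show ?thesis
      using Var_le_integral_sq_dev integrable_uniform_measure[OF finite_measure_axioms E] Z Z2 dev
        integral_uniform_measure[OF finite_measure_axioms E dev]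
      by metis
  qed
  have "Var M Z = (\<integral>x. (Z x - m)\<^sup>2 * indicator A x + (Z x - m)\<^sup>2 * indicator (space M - A) x \<partial>M)"
    unfolding Var_def m_def by (intro Bochner_Integration.integral_cong) (auto split: split_indicator)
  also have "\<dots> = (\<integral>x. (Z x - m)\<^sup>2 * indicator A x \<partial>M)
                  + (\<integral>x. (Z x - m)\<^sup>2 * indicator (space M - A) x \<partial>M)"
    using integrable_real_mult_indicator[OF A dev] integrable_real_mult_indicator[OF Ac dev]
    by (rule Bochner_Integration.integral_add)
  finally show ?thesis
    using Var_cond_le[OF A pos] Var_cond_le[OF Ac pos_compl] pos pos_compl
    by (simp add: pos_le_divide_eq mult.commute add_mono)
qed

lemma Var_uniform_measure_le_Var:
  fixes Z :: "'a \<Rightarrow> real"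
  assumes M: "prob_space M" and A: "A \<in> sets M"
    and pos: "measure M A > 0" and pos_compl: "measure M (space M - A) > 0"
    and Z: "integrable M Z" and Z2: "integrable M (\<lambda>x. (Z x)\<^sup>2)"
    and Var_le: "Var (uniform_measure M A) Z \<le> Var (uniform_measure M (space M - A)) Z"
  shows "Var (uniform_measure M A) Z \<le> Var M Z"
proof -
  have "measure M A + measure M (space M - A) = 1"
    using prob_space.prob_compl[OF M A] by simp
  then have "Var (uniform_measure M A) Z
      = measure M A * Var (uniform_measure M A) Z + measure M (space M - A) * Var (uniform_measure M A) Z"
    by (metis distrib_right mult_1)
  also have "\<dots> \<le> Var M Z"
    using Var_ge_conditional_Var_mixture[OF assms(1-6)] Var_le pos_compl
      mult_left_mono[OF Var_le, of "measure M (space M - A)"] by linarith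
  finally show ?thesis .
qed

lemma ln_add_sq_le:
  fixes b x :: real
  assumes "0 < b" "0 \<le> x"
  shows "(ln (b + x))\<^sup>2 \<le> (ln b)\<^sup>2 + 2 * (b + x)"
proof (cases "ln (b + x) \<ge> 0")
  case True
  have "1 + ln (b + x) + (ln (b + x))\<^sup>2 / 2 \<le> b + x"
    using exp_lower_Taylor_quadratic[OF True] assms by simp
  with True have "(ln (b + x))\<^sup>2 \<le> 2 * (b + x)" by (simp add: field_simps)
  then show ?thesis by (simp add: add_increasing)
next
  case False
  with assms have "\<bar>ln (b + x)\<bar> \<le> \<bar>ln b\<bar>" by auto
  then have "(ln (b + x))\<^sup>2 \<le> (ln b)\<^sup>2" by (simp add: abs_le_square_iff)
  with assms show ?thesis by (intro add_increasing2) auto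
qed

lemma
  fixes X :: "'a \<Rightarrow> real"
  assumes M: "finite_measure M" and X: "integrable M X" and X_nonneg: "\<And>x. 0 \<le> X x" and b: "0 < b"
  shows integrable_ln_add: "integrable M (\<lambda>x. ln (b + X x))"
    and integrable_ln_add_sq: "integrable M (\<lambda>x. (ln (b + X x))\<^sup>2)"
proof -
  interpret finite_measure M by fact
  have meas: "(\<lambda>x. ln (b + X x)) \<in> borel_measurable M" using X by measurable
  show "integrable M (\<lambda>x. ln (b + X x))"
  proof (rule Bochner_Integration.integrable_bound[OF _ meas])
    show "integrable M (\<lambda>x. \<bar>ln b\<bar> + b + X x)" using X by auto
    have bound: "\<bar>ln (b + X x)\<bar> \<le> \<bar>ln b\<bar> + b + X x" for x
    proof -
      have "ln b \<le> ln (b + X x)" using X_nonneg[of x] b by simp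
      moreover have "ln (b + X x) \<le> b + X x - 1" using X_nonneg[of x] b by (intro ln_le_minus_one) simp
      ultimately show ?thesis using X_nonneg[of x] b by linarith
    qed
    then show "AE x in M. norm (ln (b + X x)) \<le> norm (\<bar>ln b\<bar> + b + X x)"
      by (intro AE_I2) (smt (verit) real_norm_def)
  qed
  show "integrable M (\<lambda>x. (ln (b + X x))\<^sup>2)"
  proof (rule Bochner_Integration.integrable_bound)
    show "integrable M (\<lambda>x. (ln b)\<^sup>2 + 2 * (b + X x))" using X by auto
    show "(\<lambda>x. (ln (b + X x))\<^sup>2) \<in> borel_measurable M" using meas by measurable
    show "AE x in M. norm ((ln (b + X x))\<^sup>2) \<le> norm ((ln b)\<^sup>2 + 2 * (b + X x))"
      using ln_add_sq_le[OF b X_nonneg] X_nonneg b by (auto intro!: AE_I2)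
  qed
qed

lemma (in prob_space) expectation_ln_le_ln_expectation:
  fixes Y :: "'a \<Rightarrow> real"
  assumes "integrable M Y" "AE x in M. 0 < Y x" "integrable M (\<lambda>x. ln (Y x))"
  shows "expectation (\<lambda>x. ln (Y x)) \<le> ln (expectation Y)"
proof -
  have "convex_on {0<..} (\<lambda>t. - ln t)"
    using ln_concave by (simp add: concave_on_def)
  then have "- ln (expectation Y) \<le> expectation (\<lambda>x. - ln (Y x))"
    using assms by (intro jensens_inequality[where I="{0<..}"]) auto
  then show ?thesis by simp
qed

lemma
  fixes g :: "'v \<Rightarrow> real"
  assumes N: "prob_space N" and I: "finite I" and g: "integrable N g"
  shows integrable_sum_components_PiM: "integrable (PiM I (\<lambda>_. N)) (\<lambda>w. \<Sum>j\<in>I. g (w j))"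
    and integral_sum_components_PiM:
      "(\<integral>w. (\<Sum>j\<in>I. g (w j)) \<partial>PiM I (\<lambda>_. N)) = real (card I) * integral\<^sup>L N g"
proof -
  have g_meas: "g \<in> borel_measurable N" using g by auto
  have comp: "(\<lambda>w. w j) \<in> measurable (PiM I (\<lambda>_. N)) N" if "j \<in> I" for j
    using that by (rule measurable_component_singleton)
  have law: "distr (PiM I (\<lambda>_. N)) N (\<lambda>w. w j) = N" if "j \<in> I" for j
    using N that by (intro distr_PiM_component) auto
  have int_j: "integrable (PiM I (\<lambda>_. N)) (\<lambda>w. g (w j))" if "j \<in> I" for j
    using g law[OF that] integrable_distr_eq[OF comp[OF that] g_meas] by simp
  have integral_j: "(\<integral>w. g (w j) \<partial>PiM I (\<lambda>_. N)) = integral\<^sup>L N g" if "j \<in> I" for j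
    using law[OF that] integral_distr[OF comp[OF that] g_meas] by simp
  show "integrable (PiM I (\<lambda>_. N)) (\<lambda>w. \<Sum>j\<in>I. g (w j))"
    using int_j by auto
  show "(\<integral>w. (\<Sum>j\<in>I. g (w j)) \<partial>PiM I (\<lambda>_. N)) = real (card I) * integral\<^sup>L N g"
    using int_j integral_j by (simp add: Bochner_Integration.integral_sum)
qed

lemma Zfun_eq:
  assumes "0 < k"
  shows "Zfun f k u v1
           = (\<lambda>w. ln (real k) + f u v1 - ln (exp (f u v1) + (\<Sum>j\<in>{2..k}. exp (f u (w j)))))"
proof
  fix w
  have "0 < exp (f u v1) + (\<Sum>j\<in>{2..k}. exp (f u (w j)))"
    by (intro add_pos_nonneg) (auto intro: sum_nonneg)
  with assms show "Zfun f k u v1 w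
           = ln (real k) + f u v1 - ln (exp (f u v1) + (\<Sum>j\<in>{2..k}. exp (f u (w j))))"
    by (simp add: Zfun_def ln_div ln_mult)
qed

lemma measure_PiE_pos:
  assumes N: "prob_space N" and I: "finite I" and S: "S \<in> sets N" and pos: "emeasure N S > 0"
  shows "measure (PiM I (\<lambda>_. N)) (PiE I (\<lambda>_. S)) > 0"
proof -
  interpret product_prob_space "\<lambda>_. N" I
    using N by (simp add: product_prob_space_def product_prob_space_axioms_def product_sigma_finite_def prob_space_imp_sigma_finite)
  have "emeasure (PiM I (\<lambda>_. N)) (PiE I (\<lambda>_. S)) = emeasure N S ^ card I"
    using I S by (simp add: emeasure_PiM)
  with pos have "measure (PiM I (\<lambda>_. N)) (PiE I (\<lambda>_. S)) \<noteq> 0"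
    by (auto simp: emeasure_eq_measure)
  then show ?thesis by (simp add: zero_less_measure_iff)
qed

context
  fixes N :: "'v measure" and f :: "'u \<Rightarrow> 'v \<Rightarrow> real" and u :: 'u and k :: nat
  assumes N: "prob_space N" and exp_int: "integrable N (\<lambda>v. exp (f u v))" and k: "0 < k"
begin

lemma
  shows integrable_Zfun_PiM: "integrable (PiM {2..k} (\<lambda>_. N)) (Zfun f k u v1)"
    and integrable_Zfun_sq_PiM: "integrable (PiM {2..k} (\<lambda>_. N)) (\<lambda>w. (Zfun f k u v1 w)\<^sup>2)"
proof -
  let ?M = "PiM {2..k} (\<lambda>_. N)" and ?X = "\<lambda>w. \<Sum>j\<in>{2..k}. exp (f u (w j))"
  have fin: "finite_measure ?M"
    using N by (simp add: prob_space_PiM prob_space.finite_measure)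
  have X: "integrable ?M ?X"
    by (rule integrable_sum_components_PiM[OF N _ exp_int]) simp
  have X_nonneg: "0 \<le> ?X w" for w by (auto intro: sum_nonneg)
  note L = integrable_ln_add[OF fin X X_nonneg exp_gt_zero[of "f u v1"]]
    and L2 = integrable_ln_add_sq[OF fin X X_nonneg exp_gt_zero[of "f u v1"]]
  show "integrable ?M (Zfun f k u v1)"
    unfolding Zfun_eq[OF k] using L by (simp add: fin finite_measure.integrable_const)
  show "integrable ?M (\<lambda>w. (Zfun f k u v1 w)\<^sup>2)"
    unfolding Zfun_eq[OF k] using L L2 by (simp add: power2_diff fin finite_measure.integrable_const)
qed

lemma Ex_Zfun_PiM_ge:
  "ln (real k) + f u v1 - ln (exp (f u v1) + real (k - 1) * (\<integral>v. exp (f u v) \<partial>N))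
     \<le> Ex (PiM {2..k} (\<lambda>_. N)) (Zfun f k u v1)"
proof -
  let ?M = "PiM {2..k} (\<lambda>_. N)" and ?Y = "\<lambda>w. exp (f u v1) + (\<Sum>j\<in>{2..k}. exp (f u (w j)))"
  interpret M: prob_space ?M using N by (rule prob_space_PiM)
  have X: "integrable ?M (\<lambda>w. \<Sum>j\<in>{2..k}. exp (f u (w j)))"
    by (rule integrable_sum_components_PiM[OF N _ exp_int]) simp
  have X_nonneg: "0 \<le> (\<Sum>j\<in>{2..k}. exp (f u (w j)))" for w by (auto intro: sum_nonneg)
  note lnY = integrable_ln_add[OF M.finite_measure_axioms X X_nonneg exp_gt_zero[of "f u v1"]]
  have "M.expectation ?Y = exp (f u v1) + real (k - 1) * (\<integral>v. exp (f u v) \<partial>N)"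
    using X integral_sum_components_PiM[OF N _ exp_int, of "{2..k}"] by (simp add: M.prob_space)
  moreover have "M.expectation (\<lambda>w. ln (?Y w)) \<le> ln (M.expectation ?Y)"
    using X lnY X_nonneg
    by (intro M.expectation_ln_le_ln_expectation) (auto intro!: AE_I2 add_pos_nonneg)
  moreover have "Ex ?M (Zfun f k u v1) = ln (real k) + f u v1 - M.expectation (\<lambda>w. ln (?Y w))"
    using lnY by (simp add: Ex_def Zfun_eq[OF k] M.prob_space)
  ultimately show ?thesis by simp
qed

lemma Ex_Zfun_conditioned_le:
  assumes S: "S \<in> sets N" and S_pos: "emeasure N S > 0"
    and S_ge: "\<And>v. v \<in> S \<Longrightarrow> (\<integral>v. exp (f u v) \<partial>N) \<le> exp (f u v)"
  shows "Ex (uniform_measure (PiM {2..k} (\<lambda>_. N)) (PiE {2..k} (\<lambda>_. S))) (Zfun f k u v1)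
     \<le> ln (real k) + f u v1 - ln (exp (f u v1) + real (k - 1) * (\<integral>v. exp (f u v) \<partial>N))"
    (is "Ex ?Q ?Z \<le> ?bound")
proof -
  let ?M = "PiM {2..k} (\<lambda>_. N)" and ?A = "PiE {2..k} (\<lambda>_. S)"
    and ?c = "\<integral>v. exp (f u v) \<partial>N"
  interpret M: prob_space ?M using N by (rule prob_space_PiM)
  have A: "?A \<in> sets ?M" using S by (auto intro!: sets_PiM_I_finite)
  have A_pos: "measure ?M ?A > 0" using measure_PiE_pos[OF N finite_atLeastAtMost S S_pos] .
  interpret Q: prob_space ?Q
    using A_pos by (intro prob_space_uniform_measure) (auto simp: M.emeasure_eq_measure)
  have c_nonneg: "0 \<le> ?c" by (auto intro: integral_nonneg_AE)
  have "?Z w \<le> ?bound" if "w \<in> ?A" for w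
  proof -
    have "real (k - 1) * ?c \<le> (\<Sum>j\<in>{2..k}. exp (f u (w j)))"
      using sum_mono[of "{2..k}" "\<lambda>_. ?c" "\<lambda>j. exp (f u (w j))"] S_ge that by (auto simp: PiE_iff)
    then have "ln (exp (f u v1) + real (k - 1) * ?c) \<le> ln (exp (f u v1) + (\<Sum>j\<in>{2..k}. exp (f u (w j))))"
      using c_nonneg by (intro ln_mono) (auto intro: add_pos_nonneg)
    then show ?thesis by (simp add: Zfun_eq[OF k])
  qed
  then have "AE w in ?Q. ?Z w \<le> ?bound"
    by (intro AE_uniform_measureI[OF A] AE_I2) auto
  then have "Ex ?Q ?Z \<le> (\<integral>w. ?bound \<partial>?Q)"
    unfolding Ex_def
    by (intro integral_mono_AE integrable_uniform_measure[OF M.finite_measure_axioms A A_pos]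
        integrable_Zfun_PiM Q.integrable_const)
  then show ?thesis using Q.prob_space by simp
qed

lemma Ex_Zfun_conditioned_le_Ex_Zfun:
  assumes "S \<in> sets N" "emeasure N S > 0" "\<And>v. v \<in> S \<Longrightarrow> (\<integral>v. exp (f u v) \<partial>N) \<le> exp (f u v)"
  shows "Ex (uniform_measure (PiM {2..k} (\<lambda>_. N)) (PiE {2..k} (\<lambda>_. S))) (Zfun f k u v1)
     \<le> Ex (PiM {2..k} (\<lambda>_. N)) (Zfun f k u v1)"
  using Ex_Zfun_conditioned_le[OF assms] Ex_Zfun_PiM_ge by (rule order_trans)

lemma Var_Zfun_conditioned_le_Var_Zfun:
  defines "M \<equiv> PiM {2..k} (\<lambda>_. N)"
  assumes S: "S \<in> sets N" "emeasure N S > 0"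
    and compl_pos: "emeasure M (space M - PiE {2..k} (\<lambda>_. S)) > 0"
    and Var_le: "Var (uniform_measure M (PiE {2..k} (\<lambda>_. S))) (Zfun f k u v1)
                   \<le> Var (uniform_measure M (space M - PiE {2..k} (\<lambda>_. S))) (Zfun f k u v1)"
  shows "Var (uniform_measure M (PiE {2..k} (\<lambda>_. S))) (Zfun f k u v1) \<le> Var M (Zfun f k u v1)"
proof (rule Var_uniform_measure_le_Var[OF _ _ _ _ _ _ Var_le])
  show M: "prob_space M" unfolding M_def using N by (rule prob_space_PiM)
  show "PiE {2..k} (\<lambda>_. S) \<in> sets M" unfolding M_def using S by (auto intro!: sets_PiM_I_finite)
  show "measure M (PiE {2..k} (\<lambda>_. S)) > 0"
    unfolding M_def using measure_PiE_pos[OF N finite_atLeastAtMost S] .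
  show "measure M (space M - PiE {2..k} (\<lambda>_. S)) > 0"
    using compl_pos by (simp add: finite_measure.emeasure_eq_measure[OF prob_space.finite_measure[OF M]])
  show "integrable M (Zfun f k u v1)" "integrable M (\<lambda>w. (Zfun f k u v1 w)\<^sup>2)"
    unfolding M_def by (fact integrable_Zfun_PiM integrable_Zfun_sq_PiM)+
qed

end

theorem theorem2:
  fixes P :: "('u \<times> 'v) measure" and MU :: "'u measure" and MV :: "'v measure"
    and f :: "'u \<Rightarrow> 'v \<Rightarrow> real" and k :: nat and B :: "'u \<Rightarrow> real set"
  defines "pV \<equiv> distr P MV snd"
    and "c \<equiv> (\<lambda>u. \<integral>v. exp (f u v) \<partial>distr P MV snd)"
    and "S \<equiv> (\<lambda>u. {v \<in> space MV. exp (f u v) \<in> B u})"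
    and "pk \<equiv> (\<lambda>u::'u. PiM {2..k} (\<lambda>_. (distr P MV snd)))"
    and "q \<equiv> (\<lambda>u. uniform_measure (PiM {2..k} (\<lambda>_. (distr P MV snd))) (PiE {2..k} (\<lambda>_. {v \<in> space MV. exp (f u v) \<in> B u})))"
    and "qt \<equiv> (\<lambda>u. uniform_measure (PiM {2..k} (\<lambda>_. (distr P MV snd)))
                      (space (PiM {2..k} (\<lambda>_. (distr P MV snd))) - PiE {2..k} (\<lambda>_. {v \<in> space MV. exp (f u v) \<in> B u})))"
  assumes P: "prob_space P" and sets_P: "sets P = sets (MU \<Otimes>\<^sub>M MV)"
    and f_meas: "case_prod f \<in> borel_measurable (MU \<Otimes>\<^sub>M MV)"
    and c_fin: "\<And>u. u \<in> space MU \<Longrightarrow> integrable pV (\<lambda>v. exp (f u v))"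
    and B_borel: "\<And>u. u \<in> space MU \<Longrightarrow> B u \<in> sets borel"
    and B_sub: "\<And>u. u \<in> space MU \<Longrightarrow> B u \<subseteq> {c u<..}"
    and S_meas: "{uv \<in> space (MU \<Otimes>\<^sub>M MV). exp (f (fst uv) (snd uv)) \<in> B (fst uv)}
                   \<in> sets (MU \<Otimes>\<^sub>M MV)"
    and S_pos: "\<And>u. u \<in> space MU \<Longrightarrow> emeasure pV (S u) > 0"
    and compl_pos: "\<And>u. u \<in> space MU \<Longrightarrow>
           emeasure (PiM {2..k} (\<lambda>_. pV)) (space (PiM {2..k} (\<lambda>_. pV)) - PiE {2..k} (\<lambda>_. S u)) > 0"
    and bias_p_int: "integrable P (\<lambda>uv. Ex (pk (fst uv)) (Zfun f k (fst uv) (snd uv)))"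
    and bias_q_int: "integrable P (\<lambda>uv. Ex (q (fst uv)) (Zfun f k (fst uv) (snd uv)))"
    and var_hyp: "\<And>u v1. (u, v1) \<in> space P \<Longrightarrow>
           Var (q u) (Zfun f k u v1) \<le> Var (qt u) (Zfun f k u v1)"
  shows "Bias P MU MV pk f k \<le> Bias P MU MV q f k
         \<and> (\<forall>u v1. (u, v1) \<in> space P \<longrightarrow> Var (pk u) (Zfun f k u v1) \<ge> Var (q u) (Zfun f k u v1))"
proof -
  have space_P: "space P = space MU \<times> space MV"
    using sets_eq_imp_space_eq[OF sets_P] by (simp add: space_pair_measure)
  have "snd \<in> measurable P MV"
    using measurable_cong_sets[OF sets_P refl] by auto
  then have pV: "prob_space pV"
    unfolding pV_def using P by (intro prob_space.prob_space_distr)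
  have sets_pV: "sets pV = sets MV" unfolding pV_def by simp
  have S_sets: "S u \<in> sets pV" if u: "u \<in> space MU" for u
    using measurable_Pair2[OF f_meas u] B_borel[OF u] unfolding S_def sets_pV by simp measurable
  have S_ge: "(\<integral>v. exp (f u v) \<partial>pV) \<le> exp (f u v)" if "u \<in> space MU" "v \<in> S u" for u v
    using B_sub[OF that(1)] that(2) unfolding S_def c_def pV_def by force
  have k: "0 < k" if "u \<in> space MU" for u
    using compl_pos[OF that] by (cases k) (auto simp: space_PiM)
  have laws: "pk u = PiM {2..k} (\<lambda>_. pV)"
    "q u = uniform_measure (PiM {2..k} (\<lambda>_. pV)) (PiE {2..k} (\<lambda>_. S u))"
    "qt u = uniform_measure (PiM {2..k} (\<lambda>_. pV)) (space (PiM {2..k} (\<lambda>_. pV)) - PiE {2..k} (\<lambda>_. S u))"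
    for u unfolding pk_def q_def qt_def pV_def S_def by simp_all
  have "Ex (q u) (Zfun f k u v1) \<le> Ex (pk u) (Zfun f k u v1)" if "(u, v1) \<in> space P" for u v1
    using that space_P Ex_Zfun_conditioned_le_Ex_Zfun[OF pV c_fin k S_sets S_pos S_ge]
    unfolding laws by auto
  then have "(\<integral>uv. Ex (q (fst uv)) (Zfun f k (fst uv) (snd uv)) \<partial>P)
      \<le> (\<integral>uv. Ex (pk (fst uv)) (Zfun f k (fst uv) (snd uv)) \<partial>P)"
    using bias_q_int bias_p_int by (intro integral_mono) auto
  moreover have "Var (q u) (Zfun f k u v1) \<le> Var (pk u) (Zfun f k u v1)" if "(u, v1) \<in> space P" for u v1
    using that space_P var_hyp[OF that]
      Var_Zfun_conditioned_le_Var_Zfun[OF pV c_fin k S_sets S_pos compl_pos]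
    unfolding laws by auto
  ultimately show ?thesis unfolding Bias_def by auto
qed

end
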